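(* Let $\sigma(x)=\mathrm{e}^{-x/2}$ and let $\{p_n\}_{n\ge0}$ be the orthonormal Laguerre polynomials on $(0,\infty)$, i.e. $p_n(x)=\frac{(-1)^n}{n!}\mathrm{e}^x\frac{\mathrm{d}^n}{\mathrm{d}x^n}(x^n\mathrm{e}^{-x})$, which satisfy $\int_0^\infty p_mp_n\mathrm{e}^{-x}\,\mathrm{d}x=\delta_{m,n}$. For $z=\mathrm{e}^{i\theta}$ with $|\theta|<\pi/2$ put $p_{n,z}(x)=z^{1/2}p_n(zx)$ and $N_{n,z}=\int_0^\infty|p_{n,z}(x)\sigma(zx)|^2\,\mathrm{d}x$, where $\sigma(zx)=\mathrm{e}^{-zx/2}$. Then, with $s_\theta=\cos\theta$, \[ N_{n,z}\le s_\theta^{-2n-1}\,2^{4n+2}\quad\text{for all integers } n\ge0. \]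
   Context: $z^{1/2}$ denotes the principal square root. *)

theory Defs
  imports "HOL-Analysis.Analysis"
begin

text \<open>Orthonormal Laguerre polynomial via the Rodrigues formula,
  p_n(w) = (-1)^n / n! * e^w * (d/dw)^n (w^n e^(-w)),
  taken on the complex plane (the functions involved are entire), so that
  it can be evaluated at complex arguments z*x.\<close>
definition laguerre :: "nat \<Rightarrow> complex \<Rightarrow> complex" where
  "laguerre n w = ((-1) ^ n / of_nat (fact n)) * exp w *
      (deriv ^^ n) (\<lambda>u. u ^ n * exp (- u)) w"

definition sigma :: "complex \<Rightarrow> complex" where
  "sigma w = exp (- w / 2)"

definition p_nz :: "nat \<Rightarrow> complex \<Rightarrow> real \<Rightarrow> complex" where
  "p_nz n z x = csqrt z * laguerre n (z * of_real x)"

definition N_nz :: "nat \<Rightarrow> complex \<Rightarrow> real" where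
  "N_nz n z = (LINT x:{0<..}|lborel. (cmod (p_nz n z x * sigma (z * of_real x)))\<^sup>2)"

end

theory Submission
  imports Defs "HOL-Computational_Algebra.Polynomial" "HOL-Probability.Distributions"
begin

text \<open>
  Write D^m (q(u) e^(-u)) = (T^m q)(u) e^(-u) with T q = q' - q; Rodrigues' formula then reads
  p_n = (-1)^n T^n(X^n) / n!. Each application of T at most doubles the bound n!/i! on the i-th
  coefficient, so |p_n(w)| <= sum_(i<=n) 2^n |w|^i / i!. For |z| = 1 the integrand of N_(n,z) is
  therefore dominated by (sum_i 2^n x^i / i!)^2 e^(-x cos theta). Integrating term by term with
  int_0^oo x^k e^(-c x) dx = k! / c^(k+1), and using (i+j)! <= 2^(i+j) i! j! and
  c^(i+j+1) >= c^(2n+1) for c = cos theta <= 1, gives the bound.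
\<close>

primrec exp_neg_deriv_poly :: "nat \<Rightarrow> 'a::idom poly \<Rightarrow> 'a poly" where
  "exp_neg_deriv_poly 0 q = q"
| "exp_neg_deriv_poly (Suc m) q = pderiv (exp_neg_deriv_poly m q) - exp_neg_deriv_poly m q"

lemma higher_deriv_poly_mult_exp_neg:
  fixes q :: "'a::{real_normed_field,banach} poly"
  shows "(deriv ^^ m) (\<lambda>u. poly q u * exp (- u)) = (\<lambda>u. poly (exp_neg_deriv_poly m q) u * exp (- u))"
proof (induction m)
  case 0
  show ?case by simp
next
  case (Suc m)
  have "((\<lambda>u. poly (exp_neg_deriv_poly m q) u * exp (- u)) has_field_derivative
      poly (exp_neg_deriv_poly (Suc m) q) u * exp (- u)) (at u)" for u
    by (auto intro!: derivative_eq_intros simp: algebra_simps)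
  then show ?case
    by (simp add: Suc.IH DERIV_imp_deriv fun_eq_iff)
qed

lemma degree_exp_neg_deriv_poly_le:
  fixes q :: "'a::{idom,ring_char_0} poly"
  shows "degree (exp_neg_deriv_poly m q) \<le> degree q"
  by (induction m) (auto intro: degree_diff_le simp: degree_pderiv)

lemma norm_coeff_exp_neg_deriv_poly_monom_le:
  "norm (coeff (exp_neg_deriv_poly m (monom (1::'a::real_normed_field) n)) i) \<le> 2 ^ m * fact n / fact i"
proof (induction m arbitrary: i)
  case 0
  show ?case
    by (cases "i = n") (simp_all add: coeff_monom)
next
  case (Suc m)
  let ?q = "exp_neg_deriv_poly m (monom (1::'a) n)"
  have "norm (coeff (exp_neg_deriv_poly (Suc m) (monom (1::'a) n)) i)
      = norm (of_nat (Suc i) * coeff ?q (Suc i) - coeff ?q i)"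
    by (simp add: coeff_pderiv)
  also have "\<dots> \<le> norm (of_nat (Suc i) * coeff ?q (Suc i)) + norm (coeff ?q i)"
    by (rule norm_triangle_ineq4)
  also have "\<dots> \<le> real (Suc i) * (2 ^ m * fact n / fact (Suc i)) + 2 ^ m * fact n / fact i"
    unfolding norm_mult norm_of_nat using Suc.IH[of "Suc i"] Suc.IH[of i]
    by (intro add_mono mult_left_mono) auto
  also have "\<dots> = 2 ^ Suc m * fact n / fact i"
    by (simp add: field_simps del: of_nat_Suc)
  finally show ?case .
qed

lemma laguerre_eq_poly:
  "laguerre n w = (-1) ^ n / fact n * poly (exp_neg_deriv_poly n (monom 1 n)) w"
proof -
  have monom_form: "(\<lambda>u::complex. u ^ n * exp (- u)) = (\<lambda>u. poly (monom 1 n) u * exp (- u))"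
    by (simp add: poly_monom)
  show ?thesis
    unfolding laguerre_def monom_form higher_deriv_poly_mult_exp_neg
    by (simp add: mult.assoc mult.left_commute[of "exp w"] exp_minus_inverse)
qed

lemma norm_laguerre_le: "norm (laguerre n w) \<le> (\<Sum>i\<le>n. 2 ^ n / fact i * norm w ^ i)"
proof -
  let ?q = "exp_neg_deriv_poly n (monom (1::complex) n)"
  have "degree ?q \<le> n"
    using degree_exp_neg_deriv_poly_le[of n "monom (1::complex) n"] by (simp add: degree_monom_eq)
  then have "poly ?q w = poly (\<Sum>i\<le>n. monom (coeff ?q i) i) w"
    by (simp only: poly_as_sum_of_monoms')
  also have "\<dots> = (\<Sum>i\<le>n. coeff ?q i * w ^ i)"
    by (simp add: poly_sum poly_monom)
  finally have poly_q: "poly ?q w = (\<Sum>i\<le>n. coeff ?q i * w ^ i)" .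
  have "norm (laguerre n w) = norm (poly ?q w) / fact n"
    by (simp add: laguerre_eq_poly norm_mult norm_divide norm_power)
  also have "\<dots> \<le> (\<Sum>i\<le>n. norm (coeff ?q i) * norm w ^ i) / fact n"
    unfolding poly_q
    by (intro divide_right_mono order.trans[OF norm_sum]) (auto simp: norm_mult norm_power)
  also have "\<dots> \<le> (\<Sum>i\<le>n. 2 ^ n * fact n / fact i * norm w ^ i) / fact n"
    by (intro divide_right_mono sum_mono mult_right_mono norm_coeff_exp_neg_deriv_poly_monom_le) auto
  also have "\<dots> = (\<Sum>i\<le>n. 2 ^ n / fact i * norm w ^ i)"
    by (simp add: sum_divide_distrib)
  finally show ?thesis .
qed

lemma norm_p_nz_sigma_le:
  assumes "norm z = 1" "0 \<le> x"
  shows "(norm (p_nz n z x * sigma (z * of_real x)))\<^sup>2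
    \<le> (\<Sum>i\<le>n. 2 ^ n / fact i * x ^ i)\<^sup>2 * exp (- Re z * x)"
proof -
  have "norm (laguerre n (z * of_real x)) \<le> (\<Sum>i\<le>n. 2 ^ n / fact i * x ^ i)"
    using norm_laguerre_le[of n "z * of_real x"] assms by (simp add: norm_mult)
  moreover have "(norm (p_nz n z x * sigma (z * of_real x)))\<^sup>2
      = (norm (laguerre n (z * of_real x)))\<^sup>2 * exp (- Re z * x)"
    using assms by (simp add: p_nz_def sigma_def norm_mult power_mult_distrib flip: exp_of_nat_mult)
  ultimately show ?thesis
    by (simp add: mult_right_mono power_mono)
qed

lemma has_bochner_integral_power_mult_exp_neg:
  fixes c :: real
  assumes "0 < c"
  shows "has_bochner_integral lborel (\<lambda>x. indicator {0<..} x * (x ^ k * exp (- c * x)))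
    (fact k / c ^ Suc k)"
proof -
  have "has_bochner_integral lborel (\<lambda>x. erlang_density 0 c x * x ^ k) (fact k / c ^ k)"
    using assms nn_integral_erlang_ith_moment[OF assms, of 0 k]
    by (intro has_bochner_integral_nn_integral AE_I2) (auto simp: exponential_density_def)
  then have "has_bochner_integral lborel (\<lambda>x. erlang_density 0 c x * x ^ k / c) (fact k / c ^ k / c)"
    by (rule has_bochner_integral_divide_zero)
  moreover have "AE x in lborel. erlang_density 0 c x * x ^ k / c
      = indicator {0<..} x * (x ^ k * exp (- c * x))"
    using AE_lborel_singleton[of 0] by eventually_elim (use assms in \<open>auto simp: erlang_density_def\<close>)
  ultimately show ?thesis
    by (subst (asm) has_bochner_integral_cong_AE) (auto simp: mult.commute)
qed

lemma set_integral_mono':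
  fixes f g :: "'a \<Rightarrow> real"
  assumes "set_integrable M A g" "\<And>x. x \<in> A \<Longrightarrow> f x \<le> g x" "\<And>x. x \<in> A \<Longrightarrow> 0 \<le> g x"
  shows "(LINT x:A|M. f x) \<le> (LINT x:A|M. g x)"
  using assms unfolding set_integrable_def set_lebesgue_integral_def
  by (intro integral_mono') (auto simp: indicator_def)

lemma set_integral_square_sum_power_mult_exp_neg:
  fixes a :: "nat \<Rightarrow> real" and c :: real
  assumes "0 < c"
  shows "set_integrable lborel {0<..} (\<lambda>x. (\<Sum>i\<le>n. a i * x ^ i)\<^sup>2 * exp (- c * x))"
    and "(LINT x:{0<..}|lborel. (\<Sum>i\<le>n. a i * x ^ i)\<^sup>2 * exp (- c * x))
      = (\<Sum>i\<le>n. \<Sum>j\<le>n. a i * a j * (fact (i + j) / c ^ Suc (i + j)))"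
proof -
  have expand: "indicator {0<..} x *\<^sub>R ((\<Sum>i\<le>n. a i * x ^ i)\<^sup>2 * exp (- c * x))
      = (\<Sum>i\<le>n. \<Sum>j\<le>n. a i * a j * (indicator {0<..} x * (x ^ (i + j) * exp (- c * x))))" for x
    unfolding power2_eq_square sum_product sum_distrib_right sum_distrib_left real_scaleR_def
    by (intro sum.cong refl) (simp add: power_add algebra_simps)
  have "has_bochner_integral lborel
      (\<lambda>x. indicator {0<..} x *\<^sub>R ((\<Sum>i\<le>n. a i * x ^ i)\<^sup>2 * exp (- c * x)))
      (\<Sum>i\<le>n. \<Sum>j\<le>n. a i * a j * (fact (i + j) / c ^ Suc (i + j)))"
    unfolding expand using has_bochner_integral_power_mult_exp_neg[OF assms]
    by (intro has_bochner_integral_sum has_bochner_integral_mult_right)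
  then show "set_integrable lborel {0<..} (\<lambda>x. (\<Sum>i\<le>n. a i * x ^ i)\<^sup>2 * exp (- c * x))"
    and "(LINT x:{0<..}|lborel. (\<Sum>i\<le>n. a i * x ^ i)\<^sup>2 * exp (- c * x))
      = (\<Sum>i\<le>n. \<Sum>j\<le>n. a i * a j * (fact (i + j) / c ^ Suc (i + j)))"
    unfolding set_integrable_def set_lebesgue_integral_def
    by (simp_all add: has_bochner_integral_iff)
qed

lemma N_nz_le_majorant_moment_sum:
  assumes "norm z = 1" "0 < Re z"
  shows "N_nz n z
    \<le> (\<Sum>i\<le>n. \<Sum>j\<le>n. 2 ^ n / fact i * (2 ^ n / fact j) * (fact (i + j) / Re z ^ Suc (i + j)))"
proof -
  have "N_nz n z \<le> (LINT x:{0<..}|lborel. (\<Sum>i\<le>n. 2 ^ n / fact i * x ^ i)\<^sup>2 * exp (- Re z * x))"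
    unfolding N_nz_def using assms
    by (intro set_integral_mono' set_integral_square_sum_power_mult_exp_neg norm_p_nz_sigma_le) auto
  also have "\<dots> = (\<Sum>i\<le>n. \<Sum>j\<le>n. 2 ^ n / fact i * (2 ^ n / fact j) * (fact (i + j) / Re z ^ Suc (i + j)))"
    by (rule set_integral_square_sum_power_mult_exp_neg[OF assms(2)])
  finally show ?thesis .
qed

lemma fact_add_le_pow2_mult_fact: "fact (i + j) \<le> (2 ^ (i + j) * fact i * fact j :: 'a::linordered_semidom)"
proof -
  have "fact (i + j) = fact i * fact j * ((i + j) choose i)"
    using binomial_fact_lemma[of i "i + j"] by simp
  also have "\<dots> \<le> fact i * fact j * 2 ^ (i + j)"
    by (intro mult_le_mono2 binomial_le_pow2)
  finally have "of_nat (fact (i + j)) \<le> (of_nat (2 ^ (i + j) * fact i * fact j) :: 'a)"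
    by (simp only: of_nat_le_iff ac_simps)
  then show ?thesis
    by (simp only: of_nat_mult of_nat_power of_nat_fact of_nat_numeral)
qed

lemma majorant_moment_term_le:
  fixes c :: real
  assumes "0 < c" "c \<le> 1" "i \<le> n" "j \<le> n"
  shows "2 ^ n / fact i * (2 ^ n / fact j) * (fact (i + j) / c ^ Suc (i + j))
    \<le> 4 ^ n / c ^ Suc (2 * n) * (2 ^ i * 2 ^ j)"
proof -
  have "c ^ Suc (2 * n) \<le> c ^ Suc (i + j)"
    using assms by (intro power_decreasing) auto
  then have "2 ^ n / fact i * (2 ^ n / fact j) * (fact (i + j) / c ^ Suc (i + j))
      \<le> 2 ^ n / fact i * (2 ^ n / fact j) * (2 ^ (i + j) * fact i * fact j / c ^ Suc (2 * n))"
    using assms fact_add_le_pow2_mult_fact[of i j] by (intro mult_left_mono frac_le) auto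
  also have "\<dots> = (2 * 2) ^ n / c ^ Suc (2 * n) * (2 ^ i * 2 ^ j)"
    unfolding power_mult_distrib power_add by simp
  finally show ?thesis
    by simp
qed

lemma majorant_moment_sum_le:
  fixes c :: real
  assumes "0 < c" "c \<le> 1"
  shows "(\<Sum>i\<le>n. \<Sum>j\<le>n. 2 ^ n / fact i * (2 ^ n / fact j) * (fact (i + j) / c ^ Suc (i + j)))
    \<le> 2 ^ (4 * n + 2) / c ^ (2 * n + 1)"
proof -
  have geometric: "(\<Sum>i\<le>n. (2::real) ^ i) \<le> 2 ^ Suc n"
    by (induction n) auto
  have "(\<Sum>i\<le>n. \<Sum>j\<le>n. 2 ^ n / fact i * (2 ^ n / fact j) * (fact (i + j) / c ^ Suc (i + j)))
      \<le> (\<Sum>i\<le>n. \<Sum>j\<le>n. 4 ^ n / c ^ Suc (2 * n) * (2 ^ i * 2 ^ j))"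
    using assms by (intro sum_mono majorant_moment_term_le) auto
  also have "\<dots> = 4 ^ n / c ^ Suc (2 * n) * ((\<Sum>i\<le>n. 2 ^ i) * (\<Sum>j\<le>n. 2 ^ j))"
    by (subst sum_product) (simp only: sum_distrib_left)
  also have "\<dots> \<le> 4 ^ n / c ^ Suc (2 * n) * (2 ^ Suc n * 2 ^ Suc n)"
    using assms geometric by (intro mult_left_mono mult_mono) (auto intro: sum_nonneg)
  also have "\<dots> = 2 ^ (4 * n + 2) / c ^ (2 * n + 1)"
  proof -
    have "(4::real) ^ n * (2 ^ Suc n * 2 ^ Suc n) = 2 ^ (2 * n + (Suc n + Suc n))"
      by (simp only: power_add power_mult) simp
    also have "2 * n + (Suc n + Suc n) = 4 * n + 2"
      by simp
    finally show ?thesis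
      by simp
  qed
  finally show ?thesis .
qed

theorem theorem3:
  fixes \<theta> :: real and n :: nat
  assumes "\<bar>\<theta>\<bar> < pi / 2"
  shows "N_nz n (cis \<theta>) \<le> (2::real) ^ (4 * n + 2) / (cos \<theta>) ^ (2 * n + 1)"
proof -
  have c: "0 < cos \<theta>" "cos \<theta> \<le> 1"
    using assms by (auto intro: cos_gt_zero_pi)
  then have "N_nz n (cis \<theta>) \<le> (\<Sum>i\<le>n. \<Sum>j\<le>n.
      2 ^ n / fact i * (2 ^ n / fact j) * (fact (i + j) / cos \<theta> ^ Suc (i + j)))"
    using N_nz_le_majorant_moment_sum[of "cis \<theta>" n] by simp
  also have "\<dots> \<le> 2 ^ (4 * n + 2) / cos \<theta> ^ (2 * n + 1)"
    using c by (rule majorant_moment_sum_le)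
  finally show ?thesis .
qed

end
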